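(* Each of the following mixed extensions of $P_3$ is pseudo-cospectral with a graph in $\mathcal G''$ not isomorphic to it: (i) the mixed extension of type $(p,-q,p)$ is pseudo-cospectral with $K_p+CS_{p,2q}$, where $p\ge 2$, $q\ge 1$; (ii) the mixed extension of type $(p,(p-1)(p-2),p)$ is pseudo-cospectral with $K_{p(p-1)}+K_{p-1,p-1}$, where $p\ge 3$; (iii) the mixed extension of type $(p,q,p)$ is pseudo-cospectral with $K_p+CS_{p+q-1,r}$, where $p\ge 2$, $q\ge 1$ and $r=1+pq/(p+q-1)$ is an integer.
   Context: Let $P_3$ be the path with vertices $1,2,3$ and edges $\{1,2\},\{2,3\}$. For nonzero integers $t_1,t_2,t_3$, the mixed extension of $P_3$ of type $(t_1,t_2,t_3)$ is the graph whose vertex set is a disjoint union $V_1\cup V_2\cup V_3$ with $|V_i|=|t_i|$, where $V_i$ is a clique if $t_i>0$ and a coclique if $t_i<0$, every vertex of $V_2$ is adjacent to every vertex of $V_1\cup V_3$, and there are no edges between $V_1$ and $V_3$. $K_n$ denotes the complete graph, $K_{a,b}$ the complete bipartite graph, and $CS_{a,b}$ (complete split graph) denotes the complete graph $K_{a+b}$ from which the edges of a complete subgraph $K_b$ are deleted (so it has a clique of order $a$ and a coclique of order $b$, all joined). $G_1+G_2$ denotes the disjoint union. All spectra are adjacency spectra. $\mathcal G''$ is the class of graphs with no isolated vertices such that all but at most three adjacency eigenvalues are equal to $0$ or $-1$, and which have exactly two positive eigenvalues and exactly one eigenvalue less than $-1$. Every graph in $\mathcal G''$ on $n$ vertices has characteristic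 polynomial of the form $(x^3-bx^2-cx+d)(x+1)^b x^{n-b-3}$ with $b\ge 0$, $d>0$; two graphs in $\mathcal G''$ are called pseudo-cospectral if they have the same coefficients $b,c,d$, i.e. the same multiset of nonzero adjacency eigenvalues (possibly with different numbers of vertices). *)

theory Defs
  imports "Jordan_Normal_Form.Char_Poly"
begin

text \<open>A finite simple graph on the vertex set {0..<n} is a pair (n, E) with E a
  symmetric irreflexive adjacency relation (only its values on {0..<n} matter).\<close>

type_synonym graph = "nat \<times> (nat \<Rightarrow> nat \<Rightarrow> bool)"

definition simple_graph :: "graph \<Rightarrow> bool" where
  "simple_graph G \<longleftrightarrow> (\<forall>i<fst G. \<forall>j<fst G. (snd G i j \<longleftrightarrow> snd G j i) \<and> \<not> snd G i i)"

definition adj_mat :: "graph \<Rightarrow> real mat" where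
  "adj_mat G = mat (fst G) (fst G) (\<lambda>(i,j). if snd G i j then 1 else 0)"

text \<open>Adjacency spectrum: multiset of eigenvalues (roots of the characteristic
  polynomial, with multiplicity); all real since the adjacency matrix is symmetric.\<close>
definition spec :: "graph \<Rightarrow> real multiset" where
  "spec G = proots (char_poly (adj_mat G))"

definition no_isolated :: "graph \<Rightarrow> bool" where
  "no_isolated G \<longleftrightarrow> (\<forall>i<fst G. \<exists>j<fst G. snd G i j)"

definition isomorphic :: "graph \<Rightarrow> graph \<Rightarrow> bool" where
  "isomorphic G H \<longleftrightarrow> (\<exists>f. bij_betw f {0..<fst G} {0..<fst H} \<and>
      (\<forall>i<fst G. \<forall>j<fst G. snd G i j \<longleftrightarrow> snd H (f i) (f j)))"

definition classG2 :: "graph \<Rightarrow> bool" where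
  "classG2 G \<longleftrightarrow> simple_graph G \<and> no_isolated G \<and>
     size (filter_mset (\<lambda>x. x \<noteq> 0 \<and> x \<noteq> -1) (spec G)) \<le> 3 \<and>
     size (filter_mset (\<lambda>x. x > 0) (spec G)) = 2 \<and>
     size (filter_mset (\<lambda>x. x < -1) (spec G)) = 1"

definition pseudo_cospectral :: "graph \<Rightarrow> graph \<Rightarrow> bool" where
  "pseudo_cospectral G H \<longleftrightarrow> classG2 G \<and> classG2 H \<and>
     filter_mset (\<lambda>x. x \<noteq> 0) (spec G) = filter_mset (\<lambda>x. x \<noteq> 0) (spec H)"

definition complete :: "nat \<Rightarrow> graph" ("K") where
  "complete n = (n, \<lambda>i j. i \<noteq> j)"

definition complete_bip :: "nat \<Rightarrow> nat \<Rightarrow> graph" where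
  "complete_bip a b = (a + b, \<lambda>i j. (i < a) \<noteq> (j < a))"

text \<open>CS a b: K_(a+b) minus the edges of a K_b (vertices a..a+b-1 form the coclique).\<close>
definition complete_split :: "nat \<Rightarrow> nat \<Rightarrow> graph" where
  "complete_split a b = (a + b, \<lambda>i j. i \<noteq> j \<and> (i < a \<or> j < a))"

definition disj_union :: "graph \<Rightarrow> graph \<Rightarrow> graph" where
  "disj_union G H = (fst G + fst H, \<lambda>i j.
      (i < fst G \<and> j < fst G \<and> snd G i j) \<or>
      (fst G \<le> i \<and> fst G \<le> j \<and> snd H (i - fst G) (j - fst G)))"

text \<open>Mixed extension of P_3 of type (t1,t2,t3): blocks V1 = [0,n1), V2 = [n1,n1+n2),
  V3 = [n1+n2, n1+n2+n3) with n_k = |t_k|; V_k a clique iff t_k > 0 (coclique otherwise);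
  V2 joined to V1 and V3; no edges between V1 and V3.\<close>
definition mixed_ext_P3 :: "int \<Rightarrow> int \<Rightarrow> int \<Rightarrow> graph" where
  "mixed_ext_P3 t1 t2 t3 =
    (let n1 = nat \<bar>t1\<bar>; n2 = nat \<bar>t2\<bar>; n3 = nat \<bar>t3\<bar>;
         blk = (\<lambda>i::nat. if i < n1 then 1 else if i < n1 + n2 then 2 else (3::nat));
         t = (\<lambda>k::nat. if k = 1 then t1 else if k = 2 then t2 else t3)
     in (n1 + n2 + n3, \<lambda>i j. i \<noteq> j \<and>
          ((blk i = blk j \<and> t (blk i) > 0) \<or>
           (blk i = 2 \<and> blk j \<noteq> 2) \<or> (blk i \<noteq> 2 \<and> blk j = 2))))"

end

theory Submission
  imports Defs
begin

text \<open>
  All graphs in the proposition are blow-ups of a pattern on three vertices: every pattern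
  vertex becomes a clique or a coclique, and two blocks are completely joined or not joined
  at all according to the pattern. Merging two vertices of the same block by one row and one
  column operation splits off a factor x + 1 (clique) or x (coclique) from the characteristic
  polynomial, so the characteristic polynomial is (x + 1)^a x^e times the characteristic
  polynomial of the 3 \<times> 3 quotient matrix. In each of the three cases both quotient
  polynomials equal (x - (p - 1)) (x^2 - b x - c) with 0 < c and b + 1 < c, so the quadratic
  is negative at 0 and at -1: it has one positive root and one root below -1. Hence both
  graphs lie in G'' and share their nonzero eigenvalues, while their numbers of vertices
  differ.
\<close>

section \<open>Determinants of blown-up matrices\<close>

text \<open>The column weights \<omega> record how many vertices have been merged into a column.\<close>

definition blowup_mat ::
    "nat \<Rightarrow> (nat \<Rightarrow> nat) \<Rightarrow> (nat \<Rightarrow> 'a::comm_ring_1) \<Rightarrow> (nat \<Rightarrow> 'a) \<Rightarrow> (nat \<Rightarrow> nat \<Rightarrow> 'a) \<Rightarrow> 'a mat" where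
  "blowup_mat n \<beta> \<omega> d g = mat n n (\<lambda>(i,j). (if i = j then d (\<beta> i) else 0) + g (\<beta> i) (\<beta> j) * \<omega> j)"

lemma det_blowup_mat_delete_twin:
  assumes u: "u < n" and v: "v < n" and uv: "u \<noteq> v" and twin: "\<beta> u = \<beta> v"
  shows "det (blowup_mat n \<beta> \<omega> d g) = d (\<beta> u) *
    det (blowup_mat (n - 1) (\<beta> \<circ> insert_index u) (\<omega>(v := \<omega> u + \<omega> v) \<circ> insert_index u) d g)"
proof -
  \<comment> \<open>After subtracting row v from row u and adding column u to column v, the only nonzero
    entry of row u is the diagonal one.\<close>
  let ?A = "blowup_mat n \<beta> \<omega> d g"
  let ?C = "addcol 1 v u (addrow (-1) u v ?A)"
  have A: "?A \<in> carrier_mat n n" by (simp add: blowup_mat_def)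
  have B: "addrow (-1) u v ?A \<in> carrier_mat n n" using A by simp
  have C: "?C \<in> carrier_mat n n" using B by (simp add: mat_addcol_def)
  have "det ?A = det ?C"
    unfolding det_addcol[OF u uv[symmetric] B] det_addrow[OF v uv A] ..
  also have "\<dots> = (\<Sum>j<n. ?C $$ (u,j) * cofactor ?C u j)"
    by (rule laplace_expansion_row[OF C u])
  also have "\<dots> = (\<Sum>j<n. (if j = u then d (\<beta> u) * cofactor ?C u j else 0))"
  proof (rule sum.cong[OF refl])
    fix j assume "j \<in> {..<n}"
    then have "?C $$ (u,j) = (if j = u then d (\<beta> u) else 0)"
      using u v uv twin by (auto simp: blowup_mat_def mat_addrow_def mat_addcol_def)
    then show "?C $$ (u,j) * cofactor ?C u j = (if j = u then d (\<beta> u) * cofactor ?C u j else 0)"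
      by simp
  qed
  also have "\<dots> = d (\<beta> u) * cofactor ?C u u"
    using u by simp
  also have "cofactor ?C u u = det (mat_delete ?C u u)"
    by (simp add: cofactor_def)
  also have "mat_delete ?C u u =
      blowup_mat (n - 1) (\<beta> \<circ> insert_index u) (\<omega>(v := \<omega> u + \<omega> v) \<circ> insert_index u) d g"
    using u v uv twin
    by (intro eq_matI) (auto simp: mat_delete_def mat_addrow_def mat_addcol_def blowup_mat_def insert_index_def algebra_simps)
  finally show ?thesis .
qed

lemma mono_inj_onto_lessThan_eq_id:
  fixes \<beta> :: "nat \<Rightarrow> nat"
  assumes mono: "mono_on {..<n} \<beta>" and inj: "inj_on \<beta> {..<n}" and onto: "\<beta> ` {..<n} = {..<m}"
  shows "n = m" and "\<forall>i<n. \<beta> i = i"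
proof -
  have eq: "map \<beta> [0..<n] = [0..<m]"
  proof (rule sorted_distinct_set_unique)
    show "sorted (map \<beta> [0..<n])"
      using mono by (auto simp: sorted_iff_nth_mono mono_on_def)
    show "distinct (map \<beta> [0..<n])"
      using inj by (simp add: distinct_map atLeast0LessThan)
    show "set (map \<beta> [0..<n]) = set [0..<m]"
      using onto by (simp add: atLeast0LessThan)
  qed simp_all
  show "n = m"
    using arg_cong[OF eq, of length] by simp
  show "\<forall>i<n. \<beta> i = i"
  proof (intro allI impI)
    fix i assume "i < n"
    then show "\<beta> i = i"
      using arg_cong[OF eq, of "\<lambda>xs. xs ! i"] \<open>n = m\<close> by simp
  qed
qed

lemma insert_index_image_class:
  assumes "u < Suc n"
  shows "insert_index u ` {i. i < n \<and> (\<beta> \<circ> insert_index u) i = k} = {i. i < Suc n \<and> \<beta> i = k} - {u}"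
proof -
  have image: "insert_index u ` {..<n} = {..<Suc n} - {u}"
    using insert_index_image[OF assms] by (simp add: atLeast0LessThan)
  have "insert_index u ` {i. i < n \<and> (\<beta> \<circ> insert_index u) i = k} = {j \<in> insert_index u ` {..<n}. \<beta> j = k}"
    by auto
  also have "\<dots> = {i. i < Suc n \<and> \<beta> i = k} - {u}"
    unfolding image by auto
  finally show ?thesis .
qed

lemma sum_class_merge_twins:
  assumes u: "u < Suc n" and v: "v < Suc n" and uv: "u \<noteq> v" and twin: "\<beta> u = \<beta> v"
  shows "(\<Sum>i | i < n \<and> (\<beta> \<circ> insert_index u) i = l. (\<omega>(v := \<omega> u + \<omega> v) \<circ> insert_index u) i) =
    (\<Sum>i | i < Suc n \<and> \<beta> i = l. \<omega> i)"
proof -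
  let ?A = "{i. i < n \<and> (\<beta> \<circ> insert_index u) i = l}"
  let ?S = "{i. i < Suc n \<and> \<beta> i = l}"
  have "(\<Sum>i\<in>?A. (\<omega>(v := \<omega> u + \<omega> v) \<circ> insert_index u) i) =
      (\<Sum>i\<in>insert_index u ` ?A. (\<omega>(v := \<omega> u + \<omega> v)) i)"
    by (simp add: sum.reindex[OF insert_index_inj_on])
  also have "\<dots> = (\<Sum>i\<in>?S - {u}. (\<omega>(v := \<omega> u + \<omega> v)) i)"
    unfolding insert_index_image_class[OF u] ..
  also have "\<dots> = (\<Sum>i\<in>?S. \<omega> i)"
  proof (cases "l = \<beta> u")
    case True
    then have "u \<in> ?S" "v \<in> ?S - {u}"
      using u v uv twin by auto
    then show ?thesis
      by (simp add: sum.remove[where A="?S - {u}" and x=v] sum.remove[where A="?S" and x=u] algebra_simps)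
  next
    case False
    then show ?thesis
      using twin by (intro sum.cong) auto
  qed
  finally show ?thesis .
qed

lemma prod_class_delete_twin:
  fixes \<beta> :: "nat \<Rightarrow> nat"
  assumes u: "u < Suc n" and v: "v < Suc n" and uv: "u \<noteq> v" and twin: "\<beta> u = \<beta> v" and "\<beta> u < m"
  shows "(\<Prod>k<m. d k ^ (card {i. i < Suc n \<and> \<beta> i = k} - 1)) =
    d (\<beta> u) * (\<Prod>k<m. d k ^ (card {i. i < n \<and> (\<beta> \<circ> insert_index u) i = k} - 1))"
proof -
  let ?S = "\<lambda>k. {i. i < Suc n \<and> \<beta> i = k}"
  let ?S' = "\<lambda>k. {i. i < n \<and> (\<beta> \<circ> insert_index u) i = k}"
  have card: "card (?S' k) = card (?S k - {u})" for k
    using card_image[OF insert_index_inj_on] insert_index_image_class[OF u] by metis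
  have "card (?S k) - 1 = (card (?S' k) - 1) + (if k = \<beta> u then 1 else 0)" for k
  proof (cases "k = \<beta> u")
    case True
    then have "u \<in> ?S k" "v \<in> ?S k - {u}"
      using u v uv twin by auto
    then show ?thesis
      using True card[of k] card_Diff_singleton[of u "?S k"] card_gt_0_iff[of "?S k - {u}"] by auto
  next
    case False
    then have "?S k - {u} = ?S k"
      using twin by auto
    then show ?thesis
      using False card[of k] by simp
  qed
  then have "(\<Prod>k<m. d k ^ (card (?S k) - 1)) =
      (\<Prod>k<m. d k ^ (card (?S' k) - 1) * (if k = \<beta> u then d k else 1))"
    by (intro prod.cong) (auto simp: power_add)
  also have "\<dots> = (\<Prod>k<m. d k ^ (card (?S' k) - 1)) * d (\<beta> u)"
    using assms(5) by (simp add: prod.distrib)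
  finally show ?thesis
    by (simp add: mult.commute)
qed

lemma mono_onto_delete_twin:
  fixes \<beta> :: "nat \<Rightarrow> nat"
  assumes mono: "mono_on {..<Suc n} \<beta>" and onto: "\<beta> ` {..<Suc n} = {..<m}"
    and u: "u < Suc n" and v: "v < Suc n" and uv: "u \<noteq> v" and twin: "\<beta> u = \<beta> v"
  shows "mono_on {..<n} (\<beta> \<circ> insert_index u)" and "(\<beta> \<circ> insert_index u) ` {..<n} = {..<m}"
proof -
  have image: "insert_index u ` {..<n} = {..<Suc n} - {u}"
    using insert_index_image[OF u] by (simp add: atLeast0LessThan)
  show "mono_on {..<n} (\<beta> \<circ> insert_index u)"
    using mono image unfolding mono_on_def insert_index_def by auto
  have "\<beta> ` ({..<Suc n} - {u}) = \<beta> ` {..<Suc n}"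
    using v uv twin by (auto simp: image_iff)
  then show "(\<beta> \<circ> insert_index u) ` {..<n} = {..<m}"
    using onto unfolding image_comp[symmetric] image by simp
qed

lemma det_blowup_mat_quotient:
  fixes \<beta> :: "nat \<Rightarrow> nat"
  assumes "mono_on {..<n} \<beta>" and "\<beta> ` {..<n} = {..<m}"
  shows "det (blowup_mat n \<beta> \<omega> d g) =
    (\<Prod>k<m. d k ^ (card {i. i < n \<and> \<beta> i = k} - 1)) *
    det (blowup_mat m id (\<lambda>l. \<Sum>i | i < n \<and> \<beta> i = l. \<omega> i) d g)"
  using assms
proof (induction n arbitrary: \<beta> \<omega>)
  case 0
  then have "m = 0" by (metis image_empty lessThan_0 lessThan_eq_iff)
  then show ?case by (simp add: blowup_mat_def)
next
  case (Suc n)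
  show ?case
  proof (cases "inj_on \<beta> {..<Suc n}")
    case True
    note id = mono_inj_onto_lessThan_eq_id[OF Suc.prems(1) True Suc.prems(2)]
    have singleton: "{i. i < Suc n \<and> \<beta> i = k} = {k}" if "k < m" for k
      using id that by auto
    have "blowup_mat (Suc n) \<beta> \<omega> d g = blowup_mat m id (\<lambda>l. \<Sum>i | i < Suc n \<and> \<beta> i = l. \<omega> i) d g"
      using id singleton by (intro eq_matI) (auto simp: blowup_mat_def)
    then show ?thesis using singleton by (simp add: id_def)
  next
    case False
    then obtain u v where u: "u < Suc n" and v: "v < Suc n" and uv: "u \<noteq> v" and twin: "\<beta> u = \<beta> v"
      by (auto simp: inj_on_def)
    note delete = mono_onto_delete_twin[OF Suc.prems u v uv twin]
    note IH = Suc.IH[OF delete]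
    have "\<beta> u < m"
      using Suc.prems(2) u by blast
    have "det (blowup_mat (Suc n) \<beta> \<omega> d g) =
        d (\<beta> u) * det (blowup_mat n (\<beta> \<circ> insert_index u) (\<omega>(v := \<omega> u + \<omega> v) \<circ> insert_index u) d g)"
      by (rule det_blowup_mat_delete_twin[OF u v uv twin, unfolded diff_Suc_1])
    then show ?thesis
      unfolding IH sum_class_merge_twins[OF u v uv twin] prod_class_delete_twin[OF u v uv twin \<open>\<beta> u < m\<close>]
      by (simp only: mult.assoc)
  qed
qed

lemma det_2x2:
  assumes "A \<in> carrier_mat 2 2"
  shows "det A = A $$ (0,0) * A $$ (1,1) - A $$ (0,1) * A $$ (1,0)"
proof -
  have "det A = (\<Sum>j<2. A $$ (0,j) * cofactor A 0 j)"
    by (rule laplace_expansion_row[OF assms]) simp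
  also have "\<dots> = A $$ (0,0) * cofactor A 0 0 + A $$ (0,1) * cofactor A 0 1"
    by (simp add: eval_nat_numeral lessThan_Suc)
  also have "cofactor A 0 0 = A $$ (1,1)"
    unfolding cofactor_def using assms by (subst det_single) (auto simp: mat_delete_def numeral_2_eq_2)
  also have "cofactor A 0 1 = - A $$ (1,0)"
    unfolding cofactor_def using assms by (subst det_single) (auto simp: mat_delete_def numeral_2_eq_2)
  finally show ?thesis by simp
qed

lemma det_3x3:
  assumes "A \<in> carrier_mat 3 3"
  shows "det A = A $$ (0,0) * (A $$ (1,1) * A $$ (2,2) - A $$ (1,2) * A $$ (2,1))
    - A $$ (0,1) * (A $$ (1,0) * A $$ (2,2) - A $$ (1,2) * A $$ (2,0))
    + A $$ (0,2) * (A $$ (1,0) * A $$ (2,1) - A $$ (1,1) * A $$ (2,0))"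
proof -
  have "det A = (\<Sum>j<3. A $$ (0,j) * cofactor A 0 j)"
    by (rule laplace_expansion_row[OF assms]) simp
  also have "\<dots> = A $$ (0,0) * cofactor A 0 0 + A $$ (0,1) * cofactor A 0 1 + A $$ (0,2) * cofactor A 0 2"
    by (simp add: eval_nat_numeral lessThan_Suc)
  also have "cofactor A 0 0 = A $$ (1,1) * A $$ (2,2) - A $$ (1,2) * A $$ (2,1)"
    unfolding cofactor_def using assms by (subst det_2x2) (auto simp: mat_delete_def numeral_2_eq_2)
  also have "cofactor A 0 1 = - (A $$ (1,0) * A $$ (2,2) - A $$ (1,2) * A $$ (2,0))"
    unfolding cofactor_def using assms by (subst det_2x2) (auto simp: mat_delete_def numeral_2_eq_2)
  also have "cofactor A 0 2 = A $$ (1,0) * A $$ (2,1) - A $$ (1,1) * A $$ (2,0)"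
    unfolding cofactor_def using assms by (subst det_2x2) (auto simp: mat_delete_def numeral_2_eq_2)
  finally show ?thesis by (simp add: algebra_simps)
qed

section \<open>Blow-ups of pattern graphs\<close>

text \<open>A loop R k k makes block k a clique; without it the block is a coclique.\<close>

definition blowup_graph :: "(nat \<Rightarrow> nat \<Rightarrow> bool) \<Rightarrow> (nat \<Rightarrow> nat) \<Rightarrow> graph \<Rightarrow> bool" where
  "blowup_graph R \<beta> G \<longleftrightarrow> (\<forall>i<fst G. \<forall>j<fst G. snd G i j \<longleftrightarrow> i \<noteq> j \<and> R (\<beta> i) (\<beta> j))"

lemma simple_graph_blowup_graph:
  assumes "blowup_graph R \<beta> G" and "symp R"
  shows "simple_graph G"
  using assms unfolding blowup_graph_def simple_graph_def by (auto dest: sympD)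

lemma no_isolated_blowup_graph:
  assumes G: "blowup_graph R \<beta> G" and onto: "\<beta> ` {..<fst G} = {..<m}"
    and nbr: "\<forall>k<m. \<exists>l<m. R k l \<and> (l = k \<longrightarrow> 2 \<le> card {i. i < fst G \<and> \<beta> i = k})"
  shows "no_isolated G"
  unfolding no_isolated_def
proof (intro allI impI)
  fix i assume i: "i < fst G"
  then have "\<beta> i < m" using onto by blast
  with nbr obtain l where l: "l < m" and R: "R (\<beta> i) l"
    and big: "l = \<beta> i \<longrightarrow> 2 \<le> card {j. j < fst G \<and> \<beta> j = l}"
    by blast
  let ?S = "{j. j < fst G \<and> \<beta> j = l}"
  have "?S - {i} \<noteq> {}"
  proof (cases "l = \<beta> i")
    case True
    have "finite ?S" by simp
    then have "card (?S - {i}) > 0"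
      using big True by (simp add: card_Diff_singleton_if)
    then show ?thesis by (metis card.empty less_irrefl)
  next
    case False
    from l onto obtain j where "j < fst G" "\<beta> j = l" by (metis imageE lessThan_iff)
    with False show ?thesis by blast
  qed
  then obtain j where "j < fst G" "\<beta> j = l" "j \<noteq> i" by blast
  with G i R show "\<exists>j<fst G. snd G i j"
    unfolding blowup_graph_def by blast
qed

lemma char_poly_blowup_graph:
  fixes R :: "nat \<Rightarrow> nat \<Rightarrow> bool"
  assumes G: "blowup_graph R \<beta> G" and mono: "mono_on {..<fst G} \<beta>" and onto: "\<beta> ` {..<fst G} = {..<m}"
  shows "char_poly (adj_mat G) =
    (\<Prod>k<m. [:of_bool (R k k), 1:] ^ (card {i. i < fst G \<and> \<beta> i = k} - 1)) *
    det (blowup_mat m id (\<lambda>l. of_nat (card {i. i < fst G \<and> \<beta> i = l}))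
           (\<lambda>k. [:of_bool (R k k), 1:]) (\<lambda>k l. - of_bool (R k l)))"
proof -
  \<comment> \<open>On the diagonal the loop term of d cancels against that of g.\<close>
  have "char_poly_matrix (adj_mat G) =
      blowup_mat (fst G) \<beta> (\<lambda>_. 1) (\<lambda>k. [:of_bool (R k k), 1:]) (\<lambda>k l. - of_bool (R k l))"
    using G unfolding char_poly_matrix_def adj_mat_def blowup_mat_def blowup_graph_def
    by (intro eq_matI) auto
  then show ?thesis
    unfolding char_poly_def using det_blowup_mat_quotient[OF mono onto, of "\<lambda>_. 1"] by simp
qed

text \<open>Blocks are numbered 0, 1, 2, whereas mixed_ext_P3 numbers them 1, 2, 3.\<close>

definition block3 :: "nat \<Rightarrow> nat \<Rightarrow> nat \<Rightarrow> nat" where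
  "block3 n1 n2 i = (if i < n1 then 0 else if i < n1 + n2 then 1 else 2)"

lemma card_block3:
  assumes "k < 3"
  shows "card {i. i < n1 + n2 + n3 \<and> block3 n1 n2 i = k} = [n1, n2, n3] ! k"
proof -
  have blocks: "{i. i < n1 + n2 + n3 \<and> block3 n1 n2 i = 0} = {..<n1}"
    "{i. i < n1 + n2 + n3 \<and> block3 n1 n2 i = 1} = {n1..<n1 + n2}"
    "{i. i < n1 + n2 + n3 \<and> block3 n1 n2 i = 2} = {n1 + n2..<n1 + n2 + n3}"
    by (auto simp: block3_def)
  consider "k = 0" | "k = 1" | "k = 2"
    using assms by linarith
  then show ?thesis
    by cases (simp_all add: blocks[simplified])
qed

lemma block3_image:
  assumes "0 < n1" "0 < n2" "0 < n3"
  shows "block3 n1 n2 ` {..<n1 + n2 + n3} = {..<3}"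
proof
  show "block3 n1 n2 ` {..<n1 + n2 + n3} \<subseteq> {..<3}"
    by (auto simp: block3_def)
  have "{..<3} = block3 n1 n2 ` {0, n1, n1 + n2}"
    using assms by (auto simp: block3_def eval_nat_numeral less_Suc_eq)
  also have "\<dots> \<subseteq> block3 n1 n2 ` {..<n1 + n2 + n3}"
    using assms by (intro image_mono) auto
  finally show "{..<3} \<subseteq> block3 n1 n2 ` {..<n1 + n2 + n3}" .
qed

lemma char_poly_three_blocks:
  fixes R :: "nat \<Rightarrow> nat \<Rightarrow> bool"
  assumes G: "blowup_graph R (block3 n1 n2) G" and n: "fst G = n1 + n2 + n3"
    and pos: "0 < n1" "0 < n2" "0 < n3"
  defines "D \<equiv> \<lambda>k. [:of_bool (R k k), 1:]"
  shows "char_poly (adj_mat G) = D 0 ^ (n1 - 1) * D 1 ^ (n2 - 1) * D 2 ^ (n3 - 1) *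
    det (blowup_mat 3 id (\<lambda>l. of_nat ([n1, n2, n3] ! l)) D (\<lambda>k l. - of_bool (R k l)))"
proof -
  have mono: "mono_on {..<fst G} (block3 n1 n2)"
    by (auto simp: mono_on_def block3_def)
  have cards: "card {i. i < fst G \<and> block3 n1 n2 i = l} = [n1, n2, n3] ! l" if "l < 3" for l
    using card_block3[OF that] n by simp
  have "blowup_mat 3 id (\<lambda>l. of_nat (card {i. i < fst G \<and> block3 n1 n2 i = l})) D (\<lambda>k l. - of_bool (R k l)) =
      blowup_mat 3 id (\<lambda>l. of_nat ([n1, n2, n3] ! l)) D (\<lambda>k l. - of_bool (R k l))"
    using cards by (intro eq_matI) (auto simp: blowup_mat_def)
  then show ?thesis
    using char_poly_blowup_graph[OF G mono block3_image[OF pos, folded n]] cards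
    by (simp add: D_def eval_nat_numeral lessThan_Suc mult.assoc)
qed

lemma no_isolated_three_blocks:
  assumes G: "blowup_graph R (block3 n1 n2) G" and n: "fst G = n1 + n2 + n3"
    and pos: "0 < n1" "0 < n2" "0 < n3"
    and nbr: "\<forall>k<3. \<exists>l<3. R k l \<and> (l = k \<longrightarrow> 2 \<le> [n1, n2, n3] ! k)"
  shows "no_isolated G"
proof (rule no_isolated_blowup_graph[OF G])
  show "block3 n1 n2 ` {..<fst G} = {..<3}"
    unfolding n by (rule block3_image[OF pos])
  have "card {i. i < fst G \<and> block3 n1 n2 i = k} = [n1, n2, n3] ! k" if "k < 3" for k
    using card_block3[OF that] n by simp
  then show "\<forall>k<3. \<exists>l<3. R k l \<and> (l = k \<longrightarrow> 2 \<le> card {i. i < fst G \<and> block3 n1 n2 i = k})"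
    using nbr by simp
qed

lemma fst_mixed_ext_P3: "fst (mixed_ext_P3 t1 t2 t3) = nat \<bar>t1\<bar> + nat \<bar>t2\<bar> + nat \<bar>t3\<bar>"
  unfolding mixed_ext_P3_def Let_def by simp

lemma blowup_graph_mixed_ext_P3:
  "blowup_graph (\<lambda>k l. (k = l \<and> 0 < [t1, t2, t3] ! k) \<or> (k = 1) \<noteq> (l = 1))
     (block3 (nat \<bar>t1\<bar>) (nat \<bar>t2\<bar>)) (mixed_ext_P3 t1 t2 t3)"
proof -
  let ?b = "block3 (nat \<bar>t1\<bar>) (nat \<bar>t2\<bar>)"
  have "snd (mixed_ext_P3 t1 t2 t3) i j \<longleftrightarrow>
      i \<noteq> j \<and> ((?b i = ?b j \<and> 0 < [t1, t2, t3] ! ?b i) \<or> (?b i = 1) \<noteq> (?b j = 1))" for i j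
    unfolding mixed_ext_P3_def Let_def block3_def by simp
  then show ?thesis
    unfolding blowup_graph_def by blast
qed

lemma fst_clique_plus_split: "fst (disj_union (K a) (complete_split b c)) = a + b + c"
  unfolding disj_union_def complete_def complete_split_def by simp

lemma blowup_graph_clique_plus_split:
  "blowup_graph (\<lambda>k l. (k = 0 \<and> l = 0) \<or> (k \<noteq> 0 \<and> l \<noteq> 0 \<and> (k = 1 \<or> l = 1)))
     (block3 a b) (disj_union (K a) (complete_split b c))"
  unfolding blowup_graph_def disj_union_def complete_def complete_split_def block3_def by auto

lemma fst_clique_plus_bipartite: "fst (disj_union (K a) (complete_bip b c)) = a + b + c"
  unfolding disj_union_def complete_def complete_bip_def by simp

lemma blowup_graph_clique_plus_bipartite:
  "blowup_graph (\<lambda>k l. (k = 0 \<and> l = 0) \<or> (k \<noteq> 0 \<and> l \<noteq> 0 \<and> k \<noteq> l))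
     (block3 a b) (disj_union (K a) (complete_bip b c))"
  unfolding blowup_graph_def disj_union_def complete_def complete_bip_def block3_def by auto

lemma mixed_ext_P3_simple_no_isolated:
  assumes "t1 \<noteq> 0" "t2 \<noteq> 0" "t3 \<noteq> 0"
  shows "simple_graph (mixed_ext_P3 t1 t2 t3) \<and> no_isolated (mixed_ext_P3 t1 t2 t3)"
  using simple_graph_blowup_graph[OF blowup_graph_mixed_ext_P3]
    no_isolated_three_blocks[OF blowup_graph_mixed_ext_P3 fst_mixed_ext_P3] assms
  by (auto simp: symp_def eval_nat_numeral All_less_Suc Ex_less_Suc)

lemma clique_plus_split_simple_no_isolated:
  assumes "2 \<le> a" "0 < b" "0 < c"
  shows "simple_graph (disj_union (K a) (complete_split b c)) \<and> no_isolated (disj_union (K a) (complete_split b c))"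
  using simple_graph_blowup_graph[OF blowup_graph_clique_plus_split]
    no_isolated_three_blocks[OF blowup_graph_clique_plus_split fst_clique_plus_split] assms
  by (auto simp: symp_def eval_nat_numeral All_less_Suc Ex_less_Suc)

lemma clique_plus_bipartite_simple_no_isolated:
  assumes "2 \<le> a" "0 < b" "0 < c"
  shows "simple_graph (disj_union (K a) (complete_bip b c)) \<and> no_isolated (disj_union (K a) (complete_bip b c))"
  using simple_graph_blowup_graph[OF blowup_graph_clique_plus_bipartite]
    no_isolated_three_blocks[OF blowup_graph_clique_plus_bipartite fst_clique_plus_bipartite] assms
  by (auto simp: symp_def eval_nat_numeral All_less_Suc Ex_less_Suc)

lemma char_poly_mixed_ext_P3_coclique_middle:
  assumes "0 < p" "0 < q"
  shows "char_poly (adj_mat (mixed_ext_P3 (int p) (- int q) (int p))) =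
    [:1,1:] ^ (2 * (p - 1)) * [:0,1:] ^ (q - 1) *
    ([:-(real p - 1), 1:] * [:-(2 * real p * real q), -(real p - 1), 1:])"
proof -
  define R where "R = (\<lambda>k l. (k = l \<and> 0 < [int p, - int q, int p] ! k) \<or> (k = 1) \<noteq> (l = 1))"
  \<comment> \<open>The factor f stays folded so that simp does not multiply out the product.\<close>
  define f where "f = [:-(real p - 1), 1:] * [:-(2 * real p * real q), -(real p - 1), 1:]"
  have "R 0 0" "\<not> R 1 1" "R 2 2"
    using assms by (simp_all add: R_def)
  moreover have "det (blowup_mat 3 id (\<lambda>l. of_nat ([p, q, p] ! l)) (\<lambda>k. [:of_bool (R k k), 1:])
      (\<lambda>k l. - of_bool (R k l))) = f"
    unfolding f_def using assms by (intro poly_ext) (simp add: R_def det_3x3 blowup_mat_def algebra_simps)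
  ultimately have "char_poly (adj_mat (mixed_ext_P3 (int p) (- int q) (int p))) =
      [:1,1:] ^ (p - 1) * [:0,1:] ^ (q - 1) * [:1,1:] ^ (p - 1) * f"
    using char_poly_three_blocks[OF blowup_graph_mixed_ext_P3[of "int p" "- int q" "int p", folded R_def]]
      assms
    by (simp add: fst_mixed_ext_P3)
  also have "\<dots> = [:1,1:] ^ (2 * (p - 1)) * [:0,1:] ^ (q - 1) * f"
    unfolding mult_2 power_add by (simp only: ac_simps)
  finally show ?thesis
    unfolding f_def .
qed

lemma char_poly_mixed_ext_P3_clique_middle:
  assumes "0 < p" "0 < q"
  shows "char_poly (adj_mat (mixed_ext_P3 (int p) (int q) (int p))) =
    [:1,1:] ^ (2 * (p - 1) + (q - 1)) *
    ([:-(real p - 1), 1:] * [:-(real p * real q + real p + real q - 1), -(real p + real q - 2), 1:])"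
proof -
  define R where "R = (\<lambda>k l. (k = l \<and> 0 < [int p, int q, int p] ! k) \<or> (k = 1) \<noteq> (l = 1))"
  define f where "f = [:-(real p - 1), 1:] * [:-(real p * real q + real p + real q - 1), -(real p + real q - 2), 1:]"
  have "R 0 0" "R 1 1" "R 2 2"
    using assms by (simp_all add: R_def)
  moreover have "det (blowup_mat 3 id (\<lambda>l. of_nat ([p, q, p] ! l)) (\<lambda>k. [:of_bool (R k k), 1:])
      (\<lambda>k l. - of_bool (R k l))) = f"
    unfolding f_def using assms by (intro poly_ext) (simp add: R_def det_3x3 blowup_mat_def algebra_simps)
  ultimately have "char_poly (adj_mat (mixed_ext_P3 (int p) (int q) (int p))) =
      [:1,1:] ^ (p - 1) * [:1,1:] ^ (q - 1) * [:1,1:] ^ (p - 1) * f"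
    using char_poly_three_blocks[OF blowup_graph_mixed_ext_P3[of "int p" "int q" "int p", folded R_def]]
      assms
    by (simp add: fst_mixed_ext_P3)
  also have "\<dots> = [:1,1:] ^ (2 * (p - 1) + (q - 1)) * f"
    unfolding mult_2 power_add by (simp only: ac_simps)
  finally show ?thesis
    unfolding f_def .
qed

lemma char_poly_clique_plus_split:
  assumes "0 < a" "0 < b" "0 < c"
  shows "char_poly (adj_mat (disj_union (K a) (complete_split b c))) =
    [:1,1:] ^ ((a - 1) + (b - 1)) * [:0,1:] ^ (c - 1) *
    ([:-(real a - 1), 1:] * [:-(real b * real c), -(real b - 1), 1:])"
proof -
  define R where "R = (\<lambda>(k::nat) (l::nat). (k = 0 \<and> l = 0) \<or> (k \<noteq> 0 \<and> l \<noteq> 0 \<and> (k = 1 \<or> l = 1)))"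
  define f where "f = [:-(real a - 1), 1:] * [:-(real b * real c), -(real b - 1), 1:]"
  have "R 0 0" "R 1 1" "\<not> R 2 2"
    by (simp_all add: R_def)
  moreover have "det (blowup_mat 3 id (\<lambda>l. of_nat ([a, b, c] ! l)) (\<lambda>k. [:of_bool (R k k), 1:])
      (\<lambda>k l. - of_bool (R k l))) = f"
    unfolding f_def by (intro poly_ext) (simp add: R_def det_3x3 blowup_mat_def algebra_simps)
  ultimately have "char_poly (adj_mat (disj_union (K a) (complete_split b c))) =
      [:1,1:] ^ (a - 1) * [:1,1:] ^ (b - 1) * [:0,1:] ^ (c - 1) * f"
    using char_poly_three_blocks[OF blowup_graph_clique_plus_split[of a b c, folded R_def]
        fst_clique_plus_split assms]
    by simp
  also have "\<dots> = [:1,1:] ^ ((a - 1) + (b - 1)) * [:0,1:] ^ (c - 1) * f"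
    unfolding power_add by (simp only: ac_simps)
  finally show ?thesis
    unfolding f_def .
qed

lemma char_poly_clique_plus_bipartite:
  assumes "0 < a" "0 < b" "0 < c"
  shows "char_poly (adj_mat (disj_union (K a) (complete_bip b c))) =
    [:1,1:] ^ (a - 1) * [:0,1:] ^ ((b - 1) + (c - 1)) *
    ([:-(real a - 1), 1:] * [:-(real b * real c), 0, 1:])"
proof -
  define R where "R = (\<lambda>(k::nat) (l::nat). (k = 0 \<and> l = 0) \<or> (k \<noteq> 0 \<and> l \<noteq> 0 \<and> k \<noteq> l))"
  define f where "f = [:-(real a - 1), 1:] * [:-(real b * real c), 0, 1:]"
  have "R 0 0" "\<not> R 1 1" "\<not> R 2 2"
    by (simp_all add: R_def)
  moreover have "det (blowup_mat 3 id (\<lambda>l. of_nat ([a, b, c] ! l)) (\<lambda>k. [:of_bool (R k k), 1:])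
      (\<lambda>k l. - of_bool (R k l))) = f"
    unfolding f_def by (intro poly_ext) (simp add: R_def det_3x3 blowup_mat_def algebra_simps)
  ultimately have "char_poly (adj_mat (disj_union (K a) (complete_bip b c))) =
      [:1,1:] ^ (a - 1) * [:0,1:] ^ (b - 1) * [:0,1:] ^ (c - 1) * f"
    using char_poly_three_blocks[OF blowup_graph_clique_plus_bipartite[of a b c, folded R_def]
        fst_clique_plus_bipartite assms]
    by simp
  also have "\<dots> = [:1,1:] ^ (a - 1) * [:0,1:] ^ ((b - 1) + (c - 1)) * f"
    unfolding power_add by (simp only: ac_simps)
  finally show ?thesis
    unfolding f_def .
qed

section \<open>Spectra\<close>

lemma filter_mset_replicate_mset:
  "filter_mset P (replicate_mset n x) = (if P x then replicate_mset n x else {#})"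
  by (induction n) auto

lemma spec_eq_if_char_poly:
  assumes "char_poly (adj_mat G) = [:1,1:] ^ a * [:0,1:] ^ e * ([:-l1,1:] * ([:-l2,1:] * [:-l3,1:]))"
  shows "spec G = replicate_mset a (-1) + replicate_mset e 0 + {#l1, l2, l3#}"
  unfolding spec_def assms
  by (simp add: proots_mult proots_power del: mult_pCons_left mult_pCons_right)

lemma classG2_if_spec:
  assumes "simple_graph G" "no_isolated G"
    and "spec G = replicate_mset a (-1) + replicate_mset e 0 + {#l1, l2, l3#}"
    and "0 < l1" "0 < l2" "l3 < -1"
  shows "classG2 G"
  using assms unfolding classG2_def by (simp add: filter_mset_replicate_mset)

lemma pseudo_cospectral_if_char_poly:
  assumes G: "simple_graph G" "no_isolated G" and H: "simple_graph H" "no_isolated H"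
    and charG: "char_poly (adj_mat G) = [:1,1:] ^ a * [:0,1:] ^ e * ([:-l1,1:] * ([:-l2,1:] * [:-l3,1:]))"
    and charH: "char_poly (adj_mat H) = [:1,1:] ^ a * [:0,1:] ^ e' * ([:-l1,1:] * ([:-l2,1:] * [:-l3,1:]))"
    and l: "0 < l1" "0 < l2" "l3 < -1"
  shows "pseudo_cospectral G H"
proof -
  note specG = spec_eq_if_char_poly[OF charG] and specH = spec_eq_if_char_poly[OF charH]
  show ?thesis
    unfolding pseudo_cospectral_def
    using classG2_if_spec[OF G specG l] classG2_if_spec[OF H specH l] specG specH l
    by (simp add: filter_mset_replicate_mset)
qed

lemma quadratic_factor_signs:
  fixes b c :: real
  assumes "0 < c" "b + 1 < c"
  obtains r1 r2 where "[:-c, -b, 1:] = [:-r1, 1:] * [:-r2, 1:]" "0 < r1" "r2 < -1"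
proof -
  define s where "s = sqrt (b\<^sup>2 + 4 * c)"
  have s: "0 \<le> s" "s\<^sup>2 = b\<^sup>2 + 4 * c"
    unfolding s_def using assms by (simp_all add: add_nonneg_pos)
  have "(b + 2)\<^sup>2 < s\<^sup>2"
    using s(2) assms by (simp add: power2_eq_square algebra_simps)
  then have "b + 2 < s"
    using s(1) by (rule power_less_imp_less_base)
  moreover have "(- b)\<^sup>2 < s\<^sup>2"
    using s(2) assms by simp
  then have "- b < s"
    using s(1) by (rule power_less_imp_less_base)
  moreover have "[:-c, -b, 1:] = [:-((b + s) / 2), 1:] * [:-((b - s) / 2), 1:]"
    using s(2) by (simp add: field_simps power2_eq_square)
  ultimately show ?thesis
    using that[of "(b + s) / 2" "(b - s) / 2"] by simp
qed

lemma not_isomorphic_if_card_neq: "fst G \<noteq> fst H \<Longrightarrow> \<not> isomorphic G H"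
  unfolding isomorphic_def using bij_betw_same_card by fastforce

lemma pseudo_cospectral_mixed_ext_P3_coclique_middle:
  assumes p: "2 \<le> p" and q: "1 \<le> q"
  shows "pseudo_cospectral (mixed_ext_P3 (int p) (- int q) (int p)) (disj_union (K p) (complete_split p (2 * q)))
    \<and> \<not> isomorphic (mixed_ext_P3 (int p) (- int q) (int p)) (disj_union (K p) (complete_split p (2 * q)))"
proof
  let ?M = "mixed_ext_P3 (int p) (- int q) (int p)"
  let ?H = "disj_union (K p) (complete_split p (2 * q))"
  have pos: "0 < p" "0 < q" "0 < 2 * q"
    using p q by simp_all
  have "real p * 2 \<le> real p * (2 * real q)"
    using q by (intro mult_left_mono) auto
  then obtain x1 x2 where quad: "[:-(2 * real p * real q), -(real p - 1), 1:] = [:-x1, 1:] * [:-x2, 1:]"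
    and roots: "0 < x1" "x2 < -1"
    using quadratic_factor_signs[of "2 * real p * real q" "real p - 1"] p q by auto
  have charM: "char_poly (adj_mat ?M) =
      [:1,1:] ^ (2 * (p - 1)) * [:0,1:] ^ (q - 1) * ([:-(real p - 1), 1:] * ([:-x1, 1:] * [:-x2, 1:]))"
    using char_poly_mixed_ext_P3_coclique_middle[OF pos(1,2)] unfolding quad .
  have charH: "char_poly (adj_mat ?H) =
      [:1,1:] ^ (2 * (p - 1)) * [:0,1:] ^ (2 * q - 1) * ([:-(real p - 1), 1:] * ([:-x1, 1:] * [:-x2, 1:]))"
  proof -
    have "(p - 1) + (p - 1) = 2 * (p - 1)" "real p * real (2 * q) = 2 * real p * real q"
      by simp_all
    then show ?thesis
      using char_poly_clique_plus_split[OF pos(1,1,3)] by (simp only: quad)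
  qed
  show "pseudo_cospectral ?M ?H"
    using mixed_ext_P3_simple_no_isolated[of "int p" "- int q" "int p"]
      clique_plus_split_simple_no_isolated[of p p "2 * q"] p q roots
    by (intro pseudo_cospectral_if_char_poly[OF _ _ _ _ charM charH]) auto
  show "\<not> isomorphic ?M ?H"
    using q by (intro not_isomorphic_if_card_neq) (simp add: fst_mixed_ext_P3 fst_clique_plus_split)
qed

lemma pseudo_cospectral_mixed_ext_P3_clique_middle_bipartite:
  assumes p: "3 \<le> p"
  shows "pseudo_cospectral (mixed_ext_P3 (int p) (int ((p - 1) * (p - 2))) (int p))
      (disj_union (K (p * (p - 1))) (complete_bip (p - 1) (p - 1)))
    \<and> \<not> isomorphic (mixed_ext_P3 (int p) (int ((p - 1) * (p - 2))) (int p))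
      (disj_union (K (p * (p - 1))) (complete_bip (p - 1) (p - 1)))"
proof -
  define q where "q = (p - 1) * (p - 2)"
  let ?M = "mixed_ext_P3 (int p) (int q) (int p)"
  let ?H = "disj_union (K (p * (p - 1))) (complete_bip (p - 1) (p - 1))"
  let ?L = "[:-(real (p * (p - 1)) - 1), 1:] * ([:-(real p - 1), 1:] * [:-(1 - real p), 1:])"
  obtain k where k: "p = k + 3"
    using p by (metis add.commute le_iff_add)
  have pos: "0 < p" "0 < q" "0 < p * (p - 1)" "0 < p - 1"
    unfolding q_def k by simp_all
  have q_real: "real q = (real p - 1) * (real p - 2)"
    unfolding q_def k by (simp add: algebra_simps)
  have "[:-(real p - 1), 1:] * [:-(real p * real q + real p + real q - 1), -(real p + real q - 2), 1:] = ?L"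
    by (intro poly_ext) (simp add: q_real algebra_simps)
  moreover have "2 * (p - 1) + (q - 1) = p * (p - 1) - 1"
    unfolding q_def k by (simp add: algebra_simps)
  ultimately have charM: "char_poly (adj_mat ?M) = [:1,1:] ^ (p * (p - 1) - 1) * [:0,1:] ^ 0 * ?L"
    using char_poly_mixed_ext_P3_clique_middle[OF pos(1,2)] by (simp only: power_0 mult_1_right)
  have "[:-(real (p * (p - 1)) - 1), 1:] * [:-(real (p - 1) * real (p - 1)), 0, 1:] = ?L"
    using pos(1) by (intro poly_ext) (simp add: of_nat_diff algebra_simps)
  then have charH: "char_poly (adj_mat ?H) =
      [:1,1:] ^ (p * (p - 1) - 1) * [:0,1:] ^ ((p - 1 - 1) + (p - 1 - 1)) * ?L"
    using char_poly_clique_plus_bipartite[OF pos(3,4,4)] by (simp only:)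
  have two: "2 \<le> p * (p - 1)"
    unfolding k by simp
  then have "2 \<le> real (p * (p - 1))"
    by (metis of_nat_le_iff of_nat_numeral)
  then have "0 < real (p * (p - 1)) - 1"
    by linarith
  then have "pseudo_cospectral ?M ?H"
    using mixed_ext_P3_simple_no_isolated[of "int p" "int q" "int p"]
      clique_plus_bipartite_simple_no_isolated[OF two pos(4,4)] p pos
    by (intro pseudo_cospectral_if_char_poly[OF _ _ _ _ charM charH]) auto
  moreover have "\<not> isomorphic ?M ?H"
  proof (rule not_isomorphic_if_card_neq)
    have "p + q + p \<noteq> p * (p - 1) + (p - 1) + (p - 1)"
      unfolding q_def k by (simp add: algebra_simps)
    then show "fst ?M \<noteq> fst ?H"
      by (simp add: fst_mixed_ext_P3 fst_clique_plus_bipartite)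
  qed
  ultimately show ?thesis
    unfolding q_def by blast
qed

lemma pseudo_cospectral_mixed_ext_P3_clique_middle_split:
  assumes p: "2 \<le> p" and q: "1 \<le> q" and r: "real r = 1 + real (p * q) / real (p + q - 1)"
  shows "pseudo_cospectral (mixed_ext_P3 (int p) (int q) (int p)) (disj_union (K p) (complete_split (p + q - 1) r))
    \<and> \<not> isomorphic (mixed_ext_P3 (int p) (int q) (int p)) (disj_union (K p) (complete_split (p + q - 1) r))"
proof
  let ?M = "mixed_ext_P3 (int p) (int q) (int p)"
  let ?H = "disj_union (K p) (complete_split (p + q - 1) r)"
  have s: "real (p + q - 1) = real p + real q - 1" and s_pos: "0 < real p + real q - 1"
    using p q by (simp_all add: of_nat_diff)
  have rs: "real (p + q - 1) * real r = real p * real q + real p + real q - 1"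
    using r s_pos unfolding s by (simp add: field_simps)
  have "1 < real r"
    using r p q s_pos unfolding s by simp
  then have r_ge_2: "2 \<le> r"
    by simp
  have pos: "0 < p" "0 < q" "0 < p + q - 1" "0 < r"
    using p q r_ge_2 by simp_all
  have "0 < real p * real q"
    using pos by simp
  then obtain x1 x2 where quad: "[:-(real p * real q + real p + real q - 1), -(real p + real q - 2), 1:] =
      [:-x1, 1:] * [:-x2, 1:]" and roots: "0 < x1" "x2 < -1"
    using quadratic_factor_signs[of "real p * real q + real p + real q - 1" "real p + real q - 2"] s_pos
    by auto
  have charM: "char_poly (adj_mat ?M) = [:1,1:] ^ (2 * (p - 1) + (q - 1)) * [:0,1:] ^ 0 *
      ([:-(real p - 1), 1:] * ([:-x1, 1:] * [:-x2, 1:]))"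
    using char_poly_mixed_ext_P3_clique_middle[OF pos(1,2)] by (simp only: quad power_0 mult_1_right)
  have charH: "char_poly (adj_mat ?H) = [:1,1:] ^ (2 * (p - 1) + (q - 1)) * [:0,1:] ^ (r - 1) *
      ([:-(real p - 1), 1:] * ([:-x1, 1:] * [:-x2, 1:]))"
  proof -
    have "(p - 1) + (p + q - 1 - 1) = 2 * (p - 1) + (q - 1)" "real (p + q - 1) - 1 = real p + real q - 2"
      using p q s by simp_all
    then show ?thesis
      using char_poly_clique_plus_split[OF pos(1,3,4)] by (simp only: rs quad)
  qed
  show "pseudo_cospectral ?M ?H"
    using mixed_ext_P3_simple_no_isolated[of "int p" "int q" "int p"]
      clique_plus_split_simple_no_isolated[of p "p + q - 1" r] p pos roots
    by (intro pseudo_cospectral_if_char_poly[OF _ _ _ _ charM charH]) auto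
  show "\<not> isomorphic ?M ?H"
    using q r_ge_2 by (intro not_isomorphic_if_card_neq) (simp add: fst_mixed_ext_P3 fst_clique_plus_split)
qed

theorem proposition2:
  shows "(\<forall>p q :: nat. p \<ge> 2 \<longrightarrow> q \<ge> 1 \<longrightarrow>
            (let M = mixed_ext_P3 (int p) (- int q) (int p);
                 H = disj_union (K p) (complete_split p (2 * q))
             in pseudo_cospectral M H \<and> \<not> isomorphic M H))
    \<and> (\<forall>p :: nat. p \<ge> 3 \<longrightarrow>
            (let M = mixed_ext_P3 (int p) (int ((p - 1) * (p - 2))) (int p);
                 H = disj_union (K (p * (p - 1))) (complete_bip (p - 1) (p - 1))
             in pseudo_cospectral M H \<and> \<not> isomorphic M H))
    \<and> (\<forall>p q r :: nat. p \<ge> 2 \<longrightarrow> q \<ge> 1 \<longrightarrow>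
            real r = 1 + real (p * q) / real (p + q - 1) \<longrightarrow>
            (let M = mixed_ext_P3 (int p) (int q) (int p);
                 H = disj_union (K p) (complete_split (p + q - 1) r)
             in pseudo_cospectral M H \<and> \<not> isomorphic M H))"
  unfolding Let_def
  using pseudo_cospectral_mixed_ext_P3_coclique_middle
    pseudo_cospectral_mixed_ext_P3_clique_middle_bipartite
    pseudo_cospectral_mixed_ext_P3_clique_middle_split
  by blast

end
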